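(* For all $m,n,p\in\frac1T\mathbb N$ and $a\in V$, $\mathbf 1*^T_{n,p,m}a=\delta_{n,p}\,a$.
   Context: Throughout, $T$ is a positive integer and $V$ is a vertex algebra (vertex operator $Y(a,x)=\sum_{i\in\mathbb Z}a_ix^{-i-1}$, vacuum $\mathbf 1$) with a grading $V=\bigoplus_{i\ge\Delta}V_i$, $\Delta\in\mathbb Z_{\le0}$, such that $\mathbf 1\in V_0$ and $a_iV_j\subset V_{\mathrm{wt}a-1-i+j}$ for homogeneous $a$ ($\mathrm{wt}\,a=k$ for $a\in V_k$; $V_k=0$ for $k<\Delta$). $\mathbb N=\{0,1,2,\dots\}$. For rationals $i,j$, $\delta(i\le j)$ is $1$ if $i\le j$ and $0$ otherwise. For $i,j\in\frac1T\mathbb Z$, $\langle i-j\rangle$ is the unique integer $r$ with $0\le r\le T-1$ and $i-j-r/T\in\mathbb Z$. $\mathrm{Res}_x$ is the coefficient of $x^{-1}$; $(1+x)^c$ ($c\in\mathbb Q$) is $\sum_{k\ge0}\binom ckx^k$. For $f(z)=\sum_j\lambda_jz^j\in\mathbb C[z,z^{-1}]$ and $a,b\in V$, $f(z)|_{z^j=a_jb}=\sum_j\lambda_ja_jb$. Polynomial subspaces: for $N,q\in\mathbb Z$, $Q\in\mathbb Q$, $O(N,Q,q;z)\subset\mathbb C[z,z^{-1}]$ is spanned by $z^i$ ($i\ge N+1$) and $\sum_{i=0}^{N-q-j}\binom Qiz^{i+q+j}$ ($j=0,-1,-2,\dots$). For $m=l_1+i_1/T$, $n=l_3+i_3/T\in\frac1T\mathbb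 N$ ($l_1,l_3\in\mathbb N$, $0\le i_1,i_3\le T-1$), $\alpha,\beta\in\mathbb Z$, $s\in\{0,\dots,T-1\}$: $\mathcal O^{T,s}_{n,m}(\alpha,\beta;z)=O(\alpha+\beta-1-\Delta,\ \alpha-1+l_1+\delta(s\le i_1)+s/T,\ -l_1-l_3-\delta(s\le i_1)-\delta(T\le s+i_3)-1;z)$, and $\mathcal O^T_{n,m}(\alpha,\beta;z)=\bigcap_s\mathcal O^{T,s}_{n,m}(\alpha,\beta;z)$. Idempotent polynomials: put $N=\alpha+\beta-1-\Delta$ and $D=N+l_1+l_3+3$. For $r\in\{0,\dots,T-1\}$ and $i\in\mathbb Z$, $e^{T,r}_{n,m}(\alpha,\beta,i;z)=0$ if $i\ge N+1$ or $D\le0$; otherwise it is the unique Laurent polynomial in $\mathrm{span}\{z^k:N+1-TD\le k\le N\}$ with $e^{T,r}_{n,m}(\alpha,\beta,i;z)\equiv\delta_{r,s}z^i$ modulo $O(N,\alpha-1+l_1+\delta(s\le i_1)+s/T,-l_1-l_3-3;z)$ for every $s\in\{0,\dots,T-1\}$. Product: for $p=l_2+i_2/T\in\frac1T\mathbb N$ ($l_2\in\mathbb N$, $0\le i_2\le T-1$), let $r=\langle p-n\rangle$, $\mu=l_2-l_1-l_3-\delta(r\le i_1)-\delta(T\le r+i_3)$, and $P^T_{n,p,m}(\alpha,\beta;z)=\sum_{i=0}^{l_2}\binom{\mu}{i}\mathrm{Res}_x\Big((1+x)^{\alpha-1+l_1+\delta(r\le i_1)+r/T}x^{\mu-i}\sum_{j\in\mathbb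 Z}e^{T,r}_{n,m}(\alpha,\beta,j;z)x^{-j-1}\Big)$. For homogeneous $a,b\in V$, $a*^T_{n,p,m}b=P^T_{n,p,m}(\mathrm{wt}\,a,\mathrm{wt}\,b;z)|_{z^j=a_jb}$, extended bilinearly to all of $V$. *)

theory Defs
  imports Complex_Main
begin

text \<open>Y a i b is the i-th mode a_i b. Axioms: bilinearity, truncation, vacuum
  axioms and the Borcherds (Jacobi) identity; the infinite sums there are
  finite by truncation and are written as partial sums that stabilise.\<close>

definition vertex_algebra ::
  "(complex \<Rightarrow> 'v::ab_group_add \<Rightarrow> 'v) \<Rightarrow> ('v \<Rightarrow> int \<Rightarrow> 'v \<Rightarrow> 'v) \<Rightarrow> 'v \<Rightarrow> bool" where
  "vertex_algebra sc Y vac \<longleftrightarrow>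
     vector_space sc \<and>
     (\<forall>a i. Vector_Spaces.linear sc sc (Y a i)) \<and>
     (\<forall>b i. Vector_Spaces.linear sc sc (\<lambda>a. Y a i b)) \<and>
     (\<forall>a b. \<exists>K. \<forall>i\<ge>K. Y a i b = 0) \<and>
     (\<forall>a i. Y vac i a = (if i = -1 then a else 0)) \<and>
     (\<forall>a. Y a (-1) vac = a) \<and>
     (\<forall>a i. i \<ge> 0 \<longrightarrow> Y a i vac = 0) \<and>
     (\<forall>a b c l m n. \<exists>K0. \<forall>K\<ge>K0.
        (\<Sum>i\<le>K. sc (of_int m gchoose i) (Y (Y a (l + int i) b) (m + n - int i) c)) =
        (\<Sum>i\<le>K. sc ((-1) ^ i * (of_int l gchoose i))
            (Y a (l + m - int i) (Y b (n + int i) c)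
             - sc (if even l then 1 else -1) (Y b (l + n - int i) (Y a (m + int i) c)))))"

definition graded_vertex_algebra ::
  "(complex \<Rightarrow> 'v::ab_group_add \<Rightarrow> 'v) \<Rightarrow> ('v \<Rightarrow> int \<Rightarrow> 'v \<Rightarrow> 'v) \<Rightarrow> 'v
    \<Rightarrow> (int \<Rightarrow> 'v set) \<Rightarrow> int \<Rightarrow> bool" where
  "graded_vertex_algebra sc Y vac Vg \<Delta> \<longleftrightarrow>
     vertex_algebra sc Y vac \<and> \<Delta> \<le> 0 \<and>
     (\<forall>k. module.subspace sc (Vg k)) \<and>
     (\<forall>k. k < \<Delta> \<longrightarrow> Vg k = {0}) \<and>
     (\<forall>v. \<exists>!c. finite {k. c k \<noteq> 0} \<and> (\<forall>k. c k \<in> Vg k) \<and> v = sum c {k. c k \<noteq> 0}) \<and>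
     vac \<in> Vg 0 \<and>
     (\<forall>k j a b i. a \<in> Vg k \<longrightarrow> b \<in> Vg j \<longrightarrow> Y a i b \<in> Vg (k - 1 - i + j))"

definition comp :: "(int \<Rightarrow> 'v::ab_group_add set) \<Rightarrow> 'v \<Rightarrow> int \<Rightarrow> 'v" where
  "comp Vg v = (THE c. finite {k. c k \<noteq> 0} \<and> (\<forall>k. c k \<in> Vg k) \<and> v = sum c {k. c k \<noteq> 0})"

section \<open>Laurent polynomials in z, as finitely supported coefficient functions\<close>

type_synonym lpoly = "int \<Rightarrow> complex"

definition zmon :: "int \<Rightarrow> lpoly" where
  "zmon i = (\<lambda>k. if k = i then 1 else 0)"

definition lspan :: "lpoly set \<Rightarrow> lpoly set" where
  "lspan G = {f. \<exists>S c. finite S \<and> S \<subseteq> G \<and> f = (\<lambda>k. \<Sum>g\<in>S. c g * g k)}"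

definition binom_gen :: "int \<Rightarrow> rat \<Rightarrow> int \<Rightarrow> int \<Rightarrow> lpoly" where
  "binom_gen N Q q j = (\<lambda>k. if q + j \<le> k \<and> k \<le> N then (of_rat Q gchoose nat (k - q - j)) else 0)"

definition Ospace :: "int \<Rightarrow> rat \<Rightarrow> int \<Rightarrow> lpoly set" where
  "Ospace N Q q = lspan ({zmon i | i. i \<ge> N + 1} \<union> {binom_gen N Q q j | j. j \<le> 0})"

definition dlt :: "bool \<Rightarrow> int" where
  "dlt b = (if b then 1 else 0)"

text \<open>For x = l + i/T with 0 \<le> i \<le> T-1: lpart x = l, ipart T x = i.\<close>
definition lpart :: "rat \<Rightarrow> int" where
  "lpart x = \<lfloor>x\<rfloor>"

definition ipart :: "nat \<Rightarrow> rat \<Rightarrow> int" where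
  "ipart T x = \<lfloor>of_nat T * (x - of_int \<lfloor>x\<rfloor>)\<rfloor>"

definition bracket :: "nat \<Rightarrow> rat \<Rightarrow> rat \<Rightarrow> int" where
  "bracket T i j = (THE r. 0 \<le> r \<and> r \<le> int T - 1 \<and> i - j - of_int r / of_nat T \<in> \<int>)"

definition idem :: "nat \<Rightarrow> rat \<Rightarrow> rat \<Rightarrow> int \<Rightarrow> int \<Rightarrow> int \<Rightarrow> int \<Rightarrow> int \<Rightarrow> lpoly" where
  "idem T n m \<Delta> \<alpha> \<beta> r i =
    (let l1 = lpart m; i1 = ipart T m; l3 = lpart n;
         N = \<alpha> + \<beta> - 1 - \<Delta>; D = N + l1 + l3 + 3 in
     if i \<ge> N + 1 \<or> D \<le> 0 then (\<lambda>k. 0) else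
     (THE f. (\<forall>k. f k \<noteq> 0 \<longrightarrow> N + 1 - int T * D \<le> k \<and> k \<le> N) \<and>
        (\<forall>s\<in>{0..int T - 1}.
           (\<lambda>k. f k - (if r = s then zmon i k else 0))
             \<in> Ospace N (of_int (\<alpha> - 1 + l1 + dlt (s \<le> i1)) + of_int s / of_nat T) (- l1 - l3 - 3))))"

text \<open>The residue
  Res_x((1+x)^c x^(mu-i) sum_j e_j x^(-j-1)) is written out: only j with
  mu - i \<le> j \<le> N contribute (e_j = 0 for j \<ge> N+1).\<close>
definition Ppoly :: "nat \<Rightarrow> rat \<Rightarrow> rat \<Rightarrow> rat \<Rightarrow> int \<Rightarrow> int \<Rightarrow> int \<Rightarrow> lpoly" where
  "Ppoly T n p m \<Delta> \<alpha> \<beta> =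
    (let l1 = lpart m; i1 = ipart T m; l3 = lpart n; i3 = ipart T n; l2 = lpart p;
         r = bracket T p n;
         \<mu> = l2 - l1 - l3 - dlt (r \<le> i1) - dlt (int T \<le> r + i3);
         c = of_int (\<alpha> - 1 + l1 + dlt (r \<le> i1)) + of_int r / (of_nat T :: rat);
         N = \<alpha> + \<beta> - 1 - \<Delta> in
     (\<lambda>k. \<Sum>i\<in>{0..nat l2}. (of_int \<mu> gchoose i) *
            (\<Sum>j\<in>{\<mu> - int i..N}. (of_rat c gchoose nat (j - \<mu> + int i)) * idem T n m \<Delta> \<alpha> \<beta> r j k)))"

definition star ::
  "(complex \<Rightarrow> 'v::ab_group_add \<Rightarrow> 'v) \<Rightarrow> ('v \<Rightarrow> int \<Rightarrow> 'v \<Rightarrow> 'v) \<Rightarrow> (int \<Rightarrow> 'v set) \<Rightarrow> int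
    \<Rightarrow> nat \<Rightarrow> rat \<Rightarrow> rat \<Rightarrow> rat \<Rightarrow> 'v \<Rightarrow> 'v \<Rightarrow> 'v" where
  "star sc Y Vg \<Delta> T n p m a b =
    (\<Sum>k1\<in>{k. comp Vg a k \<noteq> 0}. \<Sum>k2\<in>{k. comp Vg b k \<noteq> 0}.
       \<Sum>j\<in>{j. Ppoly T n p m \<Delta> k1 k2 j \<noteq> 0}.
         sc (Ppoly T n p m \<Delta> k1 k2 j) (Y (comp Vg a k1) j (comp Vg b k2)))"

end

theory Submission
  imports Defs "Jordan_Normal_Form.Determinant" "HOL-Computational_Algebra.Formal_Power_Series"
begin

(* Since wt 1 = 0 and the modes of the vacuum are 1_j b = delta_{j,-1} b, the product 1 * a is
   the coefficient of z^(-1) of P^T_{n,p,m}(0, wt a; z) times a.  That coefficient is computed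
   from the coefficient of z^(-1) of the idempotent polynomials e^{T,r}_{n,m}(0, beta, j; z),
   which is delta_{r,0} delta_{j,-1}, followed by a Vandermonde identity. *)


text \<open>The binomial coefficient (x choose k), extended by zero to negative k: the coefficients
  of the power series (1+z)^x.\<close>
definition bcoef :: "complex \<Rightarrow> int \<Rightarrow> complex" where
  "bcoef x k = (if 0 \<le> k then x gchoose nat k else 0)"

lemma bcoef_neg: "k < 0 \<Longrightarrow> bcoef x k = 0"
  by (simp add: bcoef_def)

lemma bcoef_0: "bcoef x 0 = 1"
  by (simp add: bcoef_def)

lemma of_nat_gchoose_eq_0: "m < t \<Longrightarrow> (of_nat m :: complex) gchoose t = 0"
  by (metis binomial_eq_0 binomial_gbinomial of_nat_0)

lemma of_nat_gchoose_self: "(of_nat k :: complex) gchoose k = 1"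
  by (metis binomial_gbinomial binomial_n_n of_nat_1)

text \<open>Vandermonde's identity in the form (1+z)^(x+m) = (1+z)^m (1+z)^x.\<close>
lemma gchoose_add_of_nat:
  "(x + of_nat m) gchoose j = (\<Sum>t\<in>{0..m}. (of_nat m gchoose t) * bcoef x (int j - int t))"
proof -
  define F where "F t = (of_nat m gchoose t) * bcoef x (int j - int t)" for t
  have "(x + of_nat m) gchoose j = (\<Sum>t\<in>{0..j}. (of_nat m gchoose t) * (x gchoose (j - t)))"
    using gbinomial_Vandermonde[of "of_nat m" x j] by (simp add: add.commute)
  also have "\<dots> = (\<Sum>t\<in>{0..j}. F t)"
  proof (rule sum.cong[OF refl])
    fix t assume "t \<in> {0..j}"
    then have "0 \<le> int j - int t" "nat (int j - int t) = j - t" by auto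
    then show "(of_nat m gchoose t) * (x gchoose (j - t)) = F t" by (simp add: F_def bcoef_def)
  qed
  also have "\<dots> = (\<Sum>t\<in>{0..m+j}. F t)"
    by (rule sum.mono_neutral_left) (auto simp: F_def bcoef_def)
  also have "\<dots> = (\<Sum>t\<in>{0..m}. F t)"
    by (rule sum.mono_neutral_right) (auto simp: F_def of_nat_gchoose_eq_0)
  finally show ?thesis unfolding F_def .
qed


section \<open>Finitely supported coefficient functions and linear spans\<close>

lemma finite_support_sum:
  assumes "finite A" "\<And>x. x \<in> A \<Longrightarrow> finite {k. F x k \<noteq> (0::complex)}"
  shows "finite {k. (\<Sum>x\<in>A. F x k) \<noteq> 0}"
proof (rule finite_subset)
  show "{k. (\<Sum>x\<in>A. F x k) \<noteq> 0} \<subseteq> (\<Union>x\<in>A. {k. F x k \<noteq> 0})"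
    using sum.neutral[of A "\<lambda>x. F x k" for k] by blast
  show "finite (\<Union>x\<in>A. {k. F x k \<noteq> 0})" using assms by auto
qed

lemma finite_support_add:
  "finite {k. f k \<noteq> 0} \<Longrightarrow> finite {k. g k \<noteq> 0} \<Longrightarrow> finite {k. f k + g k \<noteq> (0::complex)}"
  by (rule finite_subset[of _ "{k. f k \<noteq> 0} \<union> {k. g k \<noteq> 0}"]) auto

lemma finite_support_scale: "finite {k. f k \<noteq> 0} \<Longrightarrow> finite {k. c * f k \<noteq> (0::complex)}"
  by (rule finite_subset[rotated]) auto

lemma lspan_gen: "h \<in> G \<Longrightarrow> h \<in> lspan G"
  unfolding lspan_def by (intro CollectI exI[of _ "{h}"] exI[of _ "\<lambda>_. 1"]) auto

lemma lspan_zero: "(\<lambda>k. 0) \<in> lspan G"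
  unfolding lspan_def by (intro CollectI exI[of _ "{}"]) auto

lemma lspan_add:
  assumes "f \<in> lspan G" "g \<in> lspan G"
  shows "(\<lambda>k. f k + g k) \<in> lspan G"
proof -
  obtain S1 c1 where 1: "finite S1" "S1 \<subseteq> G" "f = (\<lambda>k. \<Sum>h\<in>S1. c1 h * h k)"
    using assms(1) unfolding lspan_def by auto
  obtain S2 c2 where 2: "finite S2" "S2 \<subseteq> G" "g = (\<lambda>k. \<Sum>h\<in>S2. c2 h * h k)"
    using assms(2) unfolding lspan_def by auto
  define c where "c h = (if h \<in> S1 then c1 h else 0) + (if h \<in> S2 then c2 h else 0)" for h
  have "(\<lambda>k. f k + g k) = (\<lambda>k. \<Sum>h\<in>S1 \<union> S2. c h * h k)"
  proof
    fix k
    have "(\<Sum>h\<in>S1 \<union> S2. (if h \<in> S1 then c1 h else 0) * h k) = (\<Sum>h\<in>S1. c1 h * h k)"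
      by (rule sum.mono_neutral_cong_right) (use 1 2 in auto)
    moreover have "(\<Sum>h\<in>S1 \<union> S2. (if h \<in> S2 then c2 h else 0) * h k) = (\<Sum>h\<in>S2. c2 h * h k)"
      by (rule sum.mono_neutral_cong_right) (use 1 2 in auto)
    ultimately show "f k + g k = (\<Sum>h\<in>S1 \<union> S2. c h * h k)"
      unfolding c_def distrib_right sum.distrib using 1 2 by simp
  qed
  then show ?thesis unfolding lspan_def
    by (intro CollectI exI[of _ "S1 \<union> S2"] exI[of _ c]) (use 1 2 in auto)
qed

lemma lspan_scale:
  assumes "f \<in> lspan G"
  shows "(\<lambda>k. a * f k) \<in> lspan G"
proof -
  obtain S c where S: "finite S" "S \<subseteq> G" "f = (\<lambda>k. \<Sum>h\<in>S. c h * h k)"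
    using assms unfolding lspan_def by auto
  have "(\<lambda>k. a * f k) = (\<lambda>k. \<Sum>h\<in>S. (a * c h) * h k)"
    using S by (simp add: sum_distrib_left mult.assoc)
  then show ?thesis unfolding lspan_def
    by (intro CollectI exI[of _ S] exI[of _ "\<lambda>h. a * c h"]) (use S in auto)
qed

lemma lspan_sum:
  assumes "finite A" "\<And>x. x \<in> A \<Longrightarrow> F x \<in> lspan G"
  shows "(\<lambda>k. \<Sum>x\<in>A. F x k) \<in> lspan G"
  using assms
proof (induction A rule: finite_induct)
  case empty
  then show ?case using lspan_zero by simp
next
  case (insert x A)
  then show ?case using lspan_add[of "F x" G "\<lambda>k. \<Sum>x\<in>A. F x k"] by simp
qed

lemma lspan_induct [consumes 1, case_names zero add scaled_gen]:
  assumes "f \<in> lspan G"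
    and zero: "P (\<lambda>k. 0)"
    and add: "\<And>f g. P f \<Longrightarrow> P g \<Longrightarrow> P (\<lambda>k. f k + g k)"
    and scaled_gen: "\<And>c h. h \<in> G \<Longrightarrow> P (\<lambda>k. c * h k)"
  shows "P f"
proof -
  obtain S c where S: "finite S" "S \<subseteq> G" and f: "f = (\<lambda>k. \<Sum>h\<in>S. c h * h k)"
    using assms(1) unfolding lspan_def by auto
  have "P (\<lambda>k. \<Sum>h\<in>S'. c h * h k)" if "S' \<subseteq> S" for S'
    using finite_subset[OF that S(1)] that
  proof (induction S' rule: finite_induct)
    case empty
    then show ?case using zero by simp
  next
    case (insert h S')
    have "P (\<lambda>k. c h * h k + (\<Sum>h'\<in>S'. c h' * h' k))"
      using insert S(2) by (intro add scaled_gen) auto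
    then show ?case using insert by simp
  qed
  then show ?thesis using f by blast
qed


section \<open>The spaces O(N,Q,q) as kernels of coefficient functionals\<close>

text \<open>The coefficient of z^e in (1+z)^(-Q) g(z), for a finitely supported g.\<close>
definition coeff_twisted :: "rat \<Rightarrow> int \<Rightarrow> lpoly \<Rightarrow> complex" where
  "coeff_twisted Q e g = (\<Sum>k\<in>{k. g k \<noteq> 0}. g k * bcoef (- of_rat Q) (e - k))"

lemma coeff_twisted_superset:
  assumes "finite S" "{k. g k \<noteq> 0} \<subseteq> S"
  shows "coeff_twisted Q e g = (\<Sum>k\<in>S. g k * bcoef (- of_rat Q) (e - k))"
  unfolding coeff_twisted_def by (rule sum.mono_neutral_left) (use assms in auto)

lemma coeff_twisted_add:
  assumes "finite {k. f k \<noteq> 0}" "finite {k. h k \<noteq> 0}"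
  shows "coeff_twisted Q e (\<lambda>k. f k + h k) = coeff_twisted Q e f + coeff_twisted Q e h"
proof -
  let ?S = "{k. f k \<noteq> 0} \<union> {k. h k \<noteq> 0}"
  have fin: "finite ?S" using assms by auto
  show ?thesis
    by (subst (1 2 3) coeff_twisted_superset[OF fin]) (auto simp: sum.distrib distrib_right)
qed

lemma coeff_twisted_scale:
  assumes "finite {k. f k \<noteq> 0}"
  shows "coeff_twisted Q e (\<lambda>k. c * f k) = c * coeff_twisted Q e f"
  by (subst (1 2) coeff_twisted_superset[OF assms]) (auto simp: sum_distrib_left mult.assoc)

lemma coeff_twisted_diff:
  assumes "finite {k. f k \<noteq> 0}" "finite {k. h k \<noteq> 0}"
  shows "coeff_twisted Q e (\<lambda>k. f k - h k) = coeff_twisted Q e f - coeff_twisted Q e h"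
  using coeff_twisted_add[OF assms(1) finite_support_scale[OF assms(2)], of Q e "-1"]
    coeff_twisted_scale[OF assms(2), of Q e "-1"] by simp

lemma coeff_twisted_zmon: "coeff_twisted Q e (zmon i) = bcoef (- of_rat Q) (e - i)"
  by (subst coeff_twisted_superset[of "{i}"]) (auto simp: zmon_def)

lemma finite_support_zmon: "finite {k. zmon i k \<noteq> 0}"
  by (rule finite_subset[of _ "{i}"]) (auto simp: zmon_def)

lemma support_binom_gen: "{k. binom_gen N Q q j k \<noteq> 0} \<subseteq> {q + j..N}"
  by (auto simp: binom_gen_def split: if_splits)

lemma sum_int_interval:
  assumes "a \<le> b"
  shows "(\<Sum>k\<in>{a..b::int}. F k) = (\<Sum>i\<in>{0..nat (b - a)}. F (a + int i))"
  by (rule sum.reindex_bij_witness[of _ "\<lambda>i. a + int i" "\<lambda>k. nat (k - a)"]) (use assms in auto)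

text \<open>The generators of O(N,Q,q) of the second kind are truncations of z^(q+j) (1+z)^Q;
  multiplying by (1+z)^(-Q) leaves z^(q+j) plus terms of degree above N, so the coefficients
  of z^e for q < e \<le> N vanish (Vandermonde's identity).\<close>
lemma coeff_twisted_binom_gen:
  assumes "j \<le> 0" "q < e" "e \<le> N"
  shows "coeff_twisted Q e (binom_gen N Q q j) = 0"
proof -
  define x where "x = (of_rat Q :: complex)"
  define M where "M = nat (N - q - j)"
  define n0 where "n0 = nat (e - q - j)"
  have n0M: "n0 \<le> M" "1 \<le> n0" using assms unfolding n0_def M_def by auto
  have "coeff_twisted Q e (binom_gen N Q q j) =
      (\<Sum>k\<in>{q + j..N}. binom_gen N Q q j k * bcoef (- x) (e - k))"
    unfolding x_def by (rule coeff_twisted_superset) (use support_binom_gen in auto)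
  also have "\<dots> = (\<Sum>i\<in>{0..M}. binom_gen N Q q j (q + j + int i) * bcoef (- x) (e - (q + j + int i)))"
    unfolding M_def by (subst sum_int_interval) (use assms in \<open>auto simp: algebra_simps\<close>)
  also have "\<dots> = (\<Sum>i\<in>{0..M}. (x gchoose i) * bcoef (- x) (e - q - j - int i))"
  proof (rule sum.cong[OF refl])
    fix i assume "i \<in> {0..M}"
    then have "q + j + int i \<le> N" unfolding M_def using assms by auto
    then show "binom_gen N Q q j (q + j + int i) * bcoef (- x) (e - (q + j + int i)) =
        (x gchoose i) * bcoef (- x) (e - q - j - int i)"
      by (simp add: binom_gen_def x_def algebra_simps)
  qed
  also have "\<dots> = (\<Sum>i\<in>{0..n0}. (x gchoose i) * bcoef (- x) (e - q - j - int i))"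
    by (rule sum.mono_neutral_right) (use n0M in \<open>auto simp: n0_def bcoef_def\<close>)
  also have "\<dots> = (\<Sum>i\<in>{0..n0}. (x gchoose i) * ((- x) gchoose (n0 - i)))"
  proof (rule sum.cong[OF refl])
    fix i assume "i \<in> {0..n0}"
    then have "0 \<le> e - q - j - int i" "nat (e - q - j - int i) = n0 - i" using assms unfolding n0_def by auto
    then show "(x gchoose i) * bcoef (- x) (e - q - j - int i) = (x gchoose i) * ((- x) gchoose (n0 - i))"
      by (simp add: bcoef_def)
  qed
  also have "\<dots> = (x + - x) gchoose n0" by (rule gbinomial_Vandermonde)
  also have "\<dots> = 0" using n0M of_nat_gchoose_eq_0[of 0 n0] by simp
  finally show ?thesis .
qed

lemma Ospace_coeff_twisted:
  assumes "g \<in> Ospace N Q q"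
  shows "finite {k. g k \<noteq> 0} \<and> (\<forall>e. q < e \<and> e \<le> N \<longrightarrow> coeff_twisted Q e g = 0)"
  using assms unfolding Ospace_def
proof (induction rule: lspan_induct)
  case zero
  then show ?case by (simp add: coeff_twisted_def)
next
  case (add f g)
  then show ?case by (simp add: coeff_twisted_add finite_support_add)
next
  case (scaled_gen c h)
  then have "finite {k. h k \<noteq> 0} \<and> (\<forall>e. q < e \<and> e \<le> N \<longrightarrow> coeff_twisted Q e h = 0)"
    using finite_subset[OF support_binom_gen]
    by (auto simp: finite_support_zmon coeff_twisted_zmon bcoef_neg coeff_twisted_binom_gen)
  then show ?case by (simp add: finite_support_scale coeff_twisted_scale)
qed

text \<open>A nonzero h supported in [q+1, N] has a nonzero coefficient in (1+z)^(-Q) h at its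
  lowest degree, since (1+z)^(-Q) has constant term 1.\<close>
lemma coeff_twisted_triangular:
  assumes supp: "\<And>k. h k \<noteq> 0 \<Longrightarrow> q < k \<and> k \<le> N"
    and vanish: "\<And>e. q < e \<Longrightarrow> e \<le> N \<Longrightarrow> coeff_twisted Q e h = 0"
  shows "h = (\<lambda>k. 0)"
proof (rule ccontr)
  assume "h \<noteq> (\<lambda>k. 0)"
  then have ne: "{k. h k \<noteq> 0} \<noteq> {}" by auto
  have fin: "finite {k. h k \<noteq> 0}" by (rule finite_subset[of _ "{q<..N}"]) (use supp in auto)
  define k0 where "k0 = Min {k. h k \<noteq> 0}"
  have k0: "h k0 \<noteq> 0" "\<And>k. h k \<noteq> 0 \<Longrightarrow> k0 \<le> k"
    using Min_in[OF fin ne] Min_le[OF fin] unfolding k0_def by auto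
  have "coeff_twisted Q k0 h = (\<Sum>k\<in>{k. h k \<noteq> 0}. if k = k0 then h k else 0)"
    unfolding coeff_twisted_def
  proof (rule sum.cong[OF refl])
    fix k assume "k \<in> {k. h k \<noteq> 0}"
    then have "k0 \<le> k" using k0(2) by blast
    then show "h k * bcoef (- of_rat Q) (k0 - k) = (if k = k0 then h k else 0)"
      by (cases "k = k0") (auto simp: bcoef_0 bcoef_neg)
  qed
  also have "\<dots> = h k0" using fin k0(1) by (simp add: sum.delta')
  finally show False using vanish[of k0] supp[OF k0(1)] k0(1) by simp
qed

text \<open>Converse direction for functions supported in [q+1-M, N]: peel off the lowest
  coefficient with the generator binom_gen N Q q (-M), whose lowest term is z^(q-M).\<close>
lemma Ospace_of_bounded_support:
  "(\<And>k. h k \<noteq> 0 \<Longrightarrow> q + 1 - int M \<le> k \<and> k \<le> N) \<Longrightarrow>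
   (\<And>e. q < e \<Longrightarrow> e \<le> N \<Longrightarrow> coeff_twisted Q e h = 0) \<Longrightarrow> h \<in> Ospace N Q q"
proof (induction M arbitrary: h)
  case 0
  have "h = (\<lambda>k. 0)"
  proof (rule coeff_twisted_triangular)
    fix k assume "h k \<noteq> 0"
    then show "q < k \<and> k \<le> N" using 0(1)[of k] by simp
  qed (use 0(2) in auto)
  then show ?case unfolding Ospace_def using lspan_zero by simp
next
  case (Suc M)
  define bg where "bg = binom_gen N Q q (- int M)"
  define c where "c = h (q - int M)"
  define h' where "h' = (\<lambda>k. h k - c * bg k)"
  have finh: "finite {k. h k \<noteq> 0}"
    by (rule finite_subset[of _ "{q + 1 - int (Suc M)..N}"]) (use Suc.prems in auto)
  have finbg: "finite {k. bg k \<noteq> 0}"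
    unfolding bg_def by (rule finite_subset[OF support_binom_gen]) auto
  have bg_supp: "\<And>k. bg k \<noteq> 0 \<Longrightarrow> q - int M \<le> k \<and> k \<le> N"
    using support_binom_gen[of N Q q "- int M"] unfolding bg_def by auto
  show ?case
  proof (cases "q - int M \<le> N")
    case False
    then have "h = (\<lambda>k. 0)" using Suc.prems(1) by fastforce
    then show ?thesis unfolding Ospace_def using lspan_zero by simp
  next
    case True
    have bg_low: "bg (q - int M) = 1" using True by (simp add: bg_def binom_gen_def)
    have "h' \<in> Ospace N Q q"
    proof (rule Suc.IH)
      fix k assume k: "h' k \<noteq> 0"
      then have "k \<noteq> q - int M" using bg_low unfolding h'_def c_def by auto
      moreover have "h k \<noteq> 0 \<or> bg k \<noteq> 0" using k unfolding h'_def by auto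
      ultimately show "q + 1 - int M \<le> k \<and> k \<le> N" using Suc.prems(1)[of k] bg_supp[of k] by auto
    next
      fix e assume "q < e" "e \<le> N"
      have "coeff_twisted Q e h' = coeff_twisted Q e h - c * coeff_twisted Q e bg"
        unfolding h'_def by (simp add: coeff_twisted_diff coeff_twisted_scale finh finbg finite_support_scale)
      then show "coeff_twisted Q e h' = 0"
        using Suc.prems(2) coeff_twisted_binom_gen[of "- int M" q e N Q] \<open>q < e\<close> \<open>e \<le> N\<close>
        unfolding bg_def by simp
    qed
    moreover have "bg \<in> Ospace N Q q" unfolding Ospace_def bg_def by (rule lspan_gen) auto
    ultimately have "(\<lambda>k. h' k + c * bg k) \<in> Ospace N Q q"
      unfolding Ospace_def by (intro lspan_add lspan_scale)
    moreover have "(\<lambda>k. h' k + c * bg k) = h" unfolding h'_def by auto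
    ultimately show ?thesis by simp
  qed
qed

lemma Ospace_of_coeff_twisted:
  assumes fin: "finite {k. g k \<noteq> 0}"
    and vanish: "\<And>e. q < e \<Longrightarrow> e \<le> N \<Longrightarrow> coeff_twisted Q e g = 0"
  shows "g \<in> Ospace N Q q"
proof -
  txt \<open>Split g into its part of degree above N, a combination of generators z^k, and the rest.\<close>
  define A where "A = {k. g k \<noteq> 0 \<and> N + 1 \<le> k}"
  have finA: "finite A" using fin unfolding A_def by (rule finite_subset[rotated]) auto
  define gh where "gh = (\<lambda>k. \<Sum>x\<in>A. g x * zmon x k)"
  have gh_eq: "gh k = (if k \<in> A then g k else 0)" for k
    unfolding gh_def zmon_def using finA by (simp add: sum.delta' if_distrib cong: if_cong)
  have gh_O: "gh \<in> Ospace N Q q"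
    unfolding gh_def Ospace_def
    by (rule lspan_sum[OF finA], rule lspan_scale, rule lspan_gen) (auto simp: A_def)
  have fin_gh: "finite {k. gh k \<noteq> 0}"
    using finA by (rule finite_subset[rotated]) (auto simp: gh_eq split: if_splits)
  define gl where "gl = (\<lambda>k. g k - gh k)"
  have fin_gl: "finite {k. gl k \<noteq> 0}"
    unfolding gl_def using finite_support_add[OF fin finite_support_scale[OF fin_gh, of "-1"]] by simp
  define L where "L = Min (insert 0 {k. gl k \<noteq> 0})"
  have L: "L \<le> k" if "gl k \<noteq> 0" for k
    unfolding L_def by (rule Min_le) (use fin_gl that in auto)
  have "gl \<in> Ospace N Q q"
  proof (rule Ospace_of_bounded_support[where M = "nat (q + 1 - L)"])
    fix k assume k: "gl k \<noteq> 0"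
    have "k \<le> N" using k unfolding gl_def gh_eq A_def by (auto split: if_splits)
    then show "q + 1 - int (nat (q + 1 - L)) \<le> k \<and> k \<le> N" using L[OF k] by auto
  next
    fix e assume "q < e" "e \<le> N"
    then show "coeff_twisted Q e gl = 0"
      unfolding gl_def using vanish Ospace_coeff_twisted[OF gh_O]
      by (simp add: coeff_twisted_diff fin fin_gh)
  qed
  then have "(\<lambda>k. gl k + gh k) \<in> Ospace N Q q" using gh_O unfolding Ospace_def by (rule lspan_add)
  then show ?thesis unfolding gl_def by simp
qed

lemma Ospace_iff:
  "g \<in> Ospace N Q q \<longleftrightarrow>
    finite {k. g k \<noteq> 0} \<and> (\<forall>e. q < e \<and> e \<le> N \<longrightarrow> coeff_twisted Q e g = 0)"
  using Ospace_coeff_twisted Ospace_of_coeff_twisted by blast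

text \<open>For a natural exponent L the generators are polynomials of degree \<le> L above their lowest
  term, so elements of O(N,L,q) vanish in degrees k with q + L < k \<le> N.\<close>
lemma Ospace_nat_vanishes:
  assumes "g \<in> Ospace N (of_nat L) q" "k \<le> N" "q + int L < k"
  shows "g k = 0"
  using assms(1) unfolding Ospace_def
proof (induction rule: lspan_induct)
  case (scaled_gen c h)
  then have "h k = 0"
    using assms(2,3) by (auto simp: zmon_def binom_gen_def of_nat_gchoose_eq_0[of L])
  then show ?case by simp
qed auto


section \<open>Square systems of linear equations with binomial coefficients\<close>

lemma gchoose_combination_vanishes:
  fixes c :: "nat \<Rightarrow> complex"
  assumes "finite R" "card R \<ge> n" "\<And>y. y \<in> R \<Longrightarrow> (\<Sum>j<n. c j * (y gchoose j)) = 0"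
  shows "(\<Sum>j<n. c j * (y gchoose j)) = 0"
proof -
  define pb :: "nat \<Rightarrow> complex poly" where
    "pb j = smult (inverse (fact j)) (\<Prod>i<j. [:- of_nat i, 1:])" for j
  have poly_pb: "poly (pb j) y = y gchoose j" for j y
    by (simp add: pb_def poly_prod gbinomial_prod_rev lessThan_atLeast0 divide_inverse mult.commute)
  have deg_pb: "degree (pb j) \<le> j" for j
  proof -
    have "degree (\<Prod>i<j. [:- of_nat i, 1::complex:]) \<le> (\<Sum>i<j. degree [:- of_nat i, 1::complex:])"
      using degree_prod_sum_le[of "{..<j}" "\<lambda>i. [:- of_nat i, 1::complex:]"] by (simp add: o_def)
    then show ?thesis unfolding pb_def using degree_smult_le order_trans by fastforce
  qed
  define p where "p = (\<Sum>j<n. smult (c j) (pb j))"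
  have poly_p: "poly p y = (\<Sum>j<n. c j * (y gchoose j))" for y
    by (simp add: p_def poly_sum poly_pb)
  have "p = 0"
  proof (rule ccontr)
    assume np: "p \<noteq> 0"
    then have "n > 0" unfolding p_def by (cases n) auto
    have "degree p \<le> n - 1" unfolding p_def
      by (rule degree_sum_le) (auto intro: order_trans[OF degree_smult_le] order_trans[OF deg_pb])
    moreover have "card {y. poly p y = 0} \<le> degree p" by (rule card_poly_roots_bound[OF np])
    moreover have "card R \<le> card {y. poly p y = 0}"
      by (rule card_mono[OF poly_roots_finite[OF np]]) (use assms(3) poly_p in auto)
    ultimately show False using assms(2) \<open>n > 0\<close> by linarith
  qed
  then show ?thesis using poly_p[of y] by simp
qed

text \<open>The polynomials (y choose j) are linearly independent: evaluate at y = 0, 1, 2, \<dots>\<close>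
lemma gchoose_combination_coeffs_zero:
  fixes c :: "nat \<Rightarrow> complex"
  assumes zero: "\<And>y. (\<Sum>j<n. c j * (y gchoose j)) = 0"
  shows "k < n \<Longrightarrow> c k = 0"
proof (induction k rule: less_induct)
  case (less k)
  have "0 = (\<Sum>j<n. c j * (of_nat k gchoose j))" using zero[of "of_nat k"] by simp
  also have "\<dots> = (\<Sum>j<n. if j = k then c k else 0)"
  proof (rule sum.cong[OF refl])
    fix j assume "j \<in> {..<n}"
    then show "c j * (of_nat k gchoose j) = (if j = k then c k else 0)"
      using less.IH[of j] less.prems of_nat_gchoose_eq_0[of k j] of_nat_gchoose_self[of k]
      by (cases "j < k") (auto simp: not_less_iff_gr_or_eq)
  qed
  also have "\<dots> = c k" using less.prems by simp
  finally show ?case by simp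
qed

lemma pair_index:
  fixes s m T D :: nat
  assumes "s < T" "m < D"
  shows "s * D + m < T * D" "(s * D + m) div D = s" "(s * D + m) mod D = m"
proof -
  have "s * D + m < (s + 1) * D" using assms by simp
  also have "\<dots> \<le> T * D" using assms by (intro mult_right_mono) auto
  finally show "s * D + m < T * D" .
  show "(s * D + m) div D = s" "(s * D + m) mod D = m" using assms by auto
qed

lemma pair_index_bounds:
  fixes i T D :: nat
  assumes "i < T * D"
  shows "i div D < T" "i mod D < D"
proof -
  have "0 < D" using assms by (cases D) auto
  then show "i div D < T" "i mod D < D" using assms by (auto simp: less_mult_imp_div_less mult.commute)
qed

text \<open>The system  \<Sum>_{j < T D} v_j (x_s choose (j - m)) = t_{s,m}  (s < T, m < D) has only the
  trivial solution when t = 0, provided the points x_s + m are pairwise distinct: the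
  equations say that \<Sum>_j v_j (y choose j) vanishes at these T D points.\<close>
lemma binomial_system_injective:
  fixes x :: "nat \<Rightarrow> complex" and T D :: nat
  assumes inj: "\<And>s s' m m'. s < T \<Longrightarrow> s' < T \<Longrightarrow> m < D \<Longrightarrow> m' < D \<Longrightarrow>
          x s + of_nat m = x s' + of_nat m' \<Longrightarrow> s = s' \<and> m = m'"
    and eqs: "\<And>s m. s < T \<Longrightarrow> m < D \<Longrightarrow> (\<Sum>j<T*D. v j * bcoef (x s) (int j - int m)) = 0"
  shows "\<forall>j<T*D. v j = 0"
proof -
  define g where "g i = x (i div D) + of_nat (i mod D)" for i
  have "inj_on g {..<T*D}"
  proof (rule inj_onI)
    fix i i' assume i: "i \<in> {..<T*D}" and i': "i' \<in> {..<T*D}" and "g i = g i'"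
    then have "i div D = i' div D \<and> i mod D = i' mod D"
      using inj[OF pair_index_bounds(1)[of i] pair_index_bounds(1)[of i']
          pair_index_bounds(2)[of i] pair_index_bounds(2)[of i']] unfolding g_def by auto
    then show "i = i'" by (metis div_mult_mod_eq)
  qed
  then have card: "card (g ` {..<T*D}) = T * D" by (simp add: card_image)
  have "(\<Sum>j<T*D. v j * (y gchoose j)) = 0" if y: "y \<in> g ` {..<T*D}" for y
  proof -
    obtain i where i: "i < T*D" "y = x (i div D) + of_nat (i mod D)" using y by (auto simp: g_def)
    define s where "s = i div D"
    define m where "m = i mod D"
    have sm: "s < T" "m < D" using pair_index_bounds[OF i(1)] unfolding s_def m_def by auto
    have "(\<Sum>j<T*D. v j * (y gchoose j)) =
          (\<Sum>j<T*D. \<Sum>t\<in>{0..m}. v j * ((of_nat m gchoose t) * bcoef (x s) (int j - int t)))"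
      unfolding i(2) s_def[symmetric] m_def[symmetric] gchoose_add_of_nat by (simp add: sum_distrib_left)
    also have "\<dots> = (\<Sum>t\<in>{0..m}. (of_nat m gchoose t) * (\<Sum>j<T*D. v j * bcoef (x s) (int j - int t)))"
      by (subst sum.swap) (simp add: sum_distrib_left mult.assoc mult.left_commute)
    also have "\<dots> = 0" using eqs sm by auto
    finally show ?thesis .
  qed
  then have "(\<Sum>j<T*D. v j * (y gchoose j)) = 0" for y
    using gchoose_combination_vanishes[where R = "g ` {..<T*D}" and n = "T*D" and c = v] card by auto
  then show ?thesis using gchoose_combination_coeffs_zero[where n = "T*D" and c = v] by blast
qed

lemma square_system_solvable:
  fixes A :: "'a :: field mat"
  assumes A: "A \<in> carrier_mat n n"
    and kernel: "\<And>w. w \<in> carrier_vec n \<Longrightarrow> A *\<^sub>v w = 0\<^sub>v n \<Longrightarrow> w = 0\<^sub>v n"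
    and b: "b \<in> carrier_vec n"
  shows "\<exists>v \<in> carrier_vec n. A *\<^sub>v v = b"
proof -
  have "det A \<noteq> 0" using det_0_iff_vec_prod_zero[OF A] kernel by blast
  then have "A \<in> Units (ring_mat TYPE('a) n ())" by (rule det_non_zero_imp_unit[OF A])
  then obtain B where B: "B \<in> carrier_mat n n" "A * B = 1\<^sub>m n"
    unfolding Units_def ring_mat_def by auto
  have "A *\<^sub>v (B *\<^sub>v b) = b" using assoc_mult_mat_vec[OF A B(1) b] B(2) b by simp
  then show ?thesis using B(1) b by (intro bexI[of _ "B *\<^sub>v b"]) auto
qed

lemma binomial_system_solvable:
  fixes x :: "nat \<Rightarrow> complex" and T D :: nat and t :: "nat \<Rightarrow> nat \<Rightarrow> complex"
  assumes inj: "\<And>s s' m m'. s < T \<Longrightarrow> s' < T \<Longrightarrow> m < D \<Longrightarrow> m' < D \<Longrightarrow>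
          x s + of_nat m = x s' + of_nat m' \<Longrightarrow> s = s' \<and> m = m'"
  shows "\<exists>v. \<forall>s<T. \<forall>m<D. (\<Sum>j<T*D. v j * bcoef (x s) (int j - int m)) = t s m"
proof -
  define n where "n = T * D"
  define A :: "complex mat" where "A = mat n n (\<lambda>(i,j). bcoef (x (i div D)) (int j - int (i mod D)))"
  have A: "A \<in> carrier_mat n n" unfolding A_def by simp
  have entry: "(A *\<^sub>v w) $ (s * D + m) = (\<Sum>j<n. w $ j * bcoef (x s) (int j - int m))"
    if "s < T" "m < D" "w \<in> carrier_vec n" for s m w
    using that pair_index[OF that(1,2)] unfolding A_def n_def
    by (simp add: scalar_prod_def lessThan_atLeast0 mult.commute)
  have "\<exists>v \<in> carrier_vec n. A *\<^sub>v v = vec n (\<lambda>i. t (i div D) (i mod D))"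
  proof (rule square_system_solvable[OF A])
    fix w :: "complex vec" assume w: "w \<in> carrier_vec n" "A *\<^sub>v w = 0\<^sub>v n"
    have "\<forall>j<T*D. w $ j = 0"
    proof (rule binomial_system_injective[OF inj])
      fix s m assume sm: "s < T" "m < D"
      show "(\<Sum>j<T*D. w $ j * bcoef (x s) (int j - int m)) = 0"
        using entry[OF sm w(1)] w(2) pair_index[OF sm] by (simp add: n_def)
    qed auto
    then show "w = 0\<^sub>v n" using w(1) unfolding n_def by (intro eq_vecI) auto
  qed simp
  then obtain v where v: "v \<in> carrier_vec n" "A *\<^sub>v v = vec n (\<lambda>i. t (i div D) (i mod D))" by blast
  show ?thesis
  proof (intro exI allI impI)
    fix s m assume sm: "s < T" "m < D"
    have "t s m = (A *\<^sub>v v) $ (s * D + m)" using v(2) pair_index[OF sm] by (simp add: n_def)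
    then show "(\<Sum>j<T*D. v $ j * bcoef (x s) (int j - int m)) = t s m"
      using entry[OF sm v(1)] by (simp add: n_def)
  qed
qed


section \<open>Existence and uniqueness of the idempotent polynomials\<close>

lemma window_coeff_twisted:
  assumes "\<And>k. f k \<noteq> 0 \<Longrightarrow> N + 1 - int W \<le> k \<and> k \<le> N"
  shows "coeff_twisted Q (N - int m) f = (\<Sum>j<W. f (N - int j) * bcoef (- of_rat Q) (int j - int m))"
proof -
  have "coeff_twisted Q (N - int m) f = (\<Sum>k\<in>{N + 1 - int W..N}. f k * bcoef (- of_rat Q) (N - int m - k))"
    by (rule coeff_twisted_superset) (use assms in auto)
  also have "\<dots> = (\<Sum>j<W. f (N - int j) * bcoef (- of_rat Q) (int j - int m))"
    by (rule sum.reindex_bij_witness[of _ "\<lambda>j. N - int j" "\<lambda>k. nat (N - k)"]) (auto simp: algebra_simps)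
  finally show ?thesis .
qed

lemma window_Ospace_iff:
  assumes supp: "\<And>k. f k \<noteq> 0 \<Longrightarrow> N + 1 - int W \<le> k \<and> k \<le> N" and fin: "finite {k. g k \<noteq> 0}"
  shows "(\<lambda>k. f k - g k) \<in> Ospace N Q (N - int D) \<longleftrightarrow>
    (\<forall>m<D. (\<Sum>j<W. f (N - int j) * bcoef (- of_rat Q) (int j - int m)) = coeff_twisted Q (N - int m) g)"
proof -
  have finf: "finite {k. f k \<noteq> 0}" by (rule finite_subset[of _ "{N + 1 - int W..N}"]) (use supp in auto)
  have degrees: "(\<forall>e. N - int D < e \<and> e \<le> N \<longrightarrow> P e) \<longleftrightarrow> (\<forall>m<D. P (N - int m))" for P
  proof (intro iffI allI impI)
    fix e assume all: "\<forall>m<D. P (N - int m)" and e: "N - int D < e \<and> e \<le> N"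
    then have "nat (N - e) < D" by auto
    then have "P (N - int (nat (N - e)))" using all by blast
    then show "P e" using e by simp
  qed auto
  show ?thesis
    unfolding Ospace_iff degrees coeff_twisted_diff[OF finf fin]
    using finite_support_add[OF finf finite_support_scale[OF fin, of "-1"]]
    by (simp add: window_coeff_twisted[OF supp])
qed

lemma offsets_incongruent:
  fixes T :: nat and c :: "int \<Rightarrow> int"
  assumes T0: "T > 0"
    and s: "s \<in> {0..int T - 1}" and s': "s' \<in> {0..int T - 1}"
    and z: "(of_int (c s) + of_int s / of_nat T) - (of_int (c s') + of_int s' / of_nat T) \<in> (\<int> :: rat set)"
  shows "s = s'"
proof -
  have "of_int (s - s') / (of_nat T :: rat) =
      ((of_int (c s) + of_int s / of_nat T) - (of_int (c s') + of_int s' / of_nat T)) - of_int (c s - c s')"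
    using T0 by (simp add: field_simps)
  also have "\<dots> \<in> \<int>" by (rule Ints_diff[OF z]) simp
  finally obtain z where "of_int (s - s') / (of_nat T :: rat) = of_int z" by (auto elim: Ints_cases)
  then have "(of_int (s - s') :: rat) = of_int (z * int T)" using T0 by (simp add: field_simps)
  then have e: "s - s' = z * int T" by (simp only: of_int_eq_iff)
  have "\<bar>s - s'\<bar> < int T" using s s' by auto
  then have "\<bar>z\<bar> * int T < 1 * int T" using e by (simp add: abs_mult)
  then have "z = 0" using T0 by (simp only: mult_less_cancel_right) auto
  then show ?thesis using e by simp
qed

text \<open>The T D conditions form a uniquely solvable square system.\<close>
lemma window_interpolation_ex1:
  fixes T D :: nat and Q :: "int \<Rightarrow> rat" and g :: "int \<Rightarrow> lpoly"
  assumes incongruent: "\<And>s s'. s \<in> {0..int T - 1} \<Longrightarrow> s' \<in> {0..int T - 1} \<Longrightarrow> Q s - Q s' \<in> \<int> \<Longrightarrow> s = s'"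
    and fin: "\<And>s. finite {k. g s k \<noteq> 0}"
  shows "\<exists>!f. (\<forall>k. f k \<noteq> 0 \<longrightarrow> N + 1 - int (T * D) \<le> k \<and> k \<le> N) \<and>
     (\<forall>s\<in>{0..int T - 1}. (\<lambda>k. f k - g s k) \<in> Ospace N (Q s) (N - int D))"
proof -
  define x where "x s = - (of_rat (Q (int s)) :: complex)" for s :: nat
  define t where "t s m = coeff_twisted (Q (int s)) (N - int m) (g (int s))" for s m :: nat
  define window where "window f \<longleftrightarrow> (\<forall>k. f k \<noteq> 0 \<longrightarrow> N + 1 - int (T * D) \<le> k \<and> k \<le> N)" for f :: lpoly
  define system where "system v \<longleftrightarrow> (\<forall>s<T. \<forall>m<D. (\<Sum>j<T*D. v j * bcoef (x s) (int j - int m)) = t s m)"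
    for v :: "nat \<Rightarrow> complex"
  have inj: "s = s' \<and> m = m'"
    if "s < T" "s' < T" "m < D" "m' < D" "x s + of_nat m = x s' + of_nat m'" for s s' m m'
  proof -
    have "(of_rat (Q (int s') - Q (int s)) :: complex) = of_rat (of_int (int m' - int m))"
      using that(5) unfolding x_def by (simp add: of_rat_diff algebra_simps)
    then have "Q (int s') - Q (int s) = of_int (int m' - int m)" by (simp only: of_rat_eq_iff)
    then have "int s' = int s" using incongruent[of "int s'" "int s"] that by auto
    then show ?thesis using that(5) by simp
  qed
  have reduce: "(\<forall>s\<in>{0..int T - 1}. (\<lambda>k. f k - g s k) \<in> Ospace N (Q s) (N - int D)) \<longleftrightarrow>
      system (\<lambda>j. f (N - int j))" if "window f" for f
  proof -
    have "(\<forall>s\<in>{0..int T - 1}. P s) \<longleftrightarrow> (\<forall>s<T. P (int s))" for P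
    proof (intro iffI ballI allI impI)
      fix s assume all: "\<forall>s<T. P (int s)" and s: "s \<in> {0..int T - 1}"
      then have "nat s < T" by auto
      then show "P s" using all s by (metis atLeastAtMost_iff int_nat_eq)
    qed auto
    then show ?thesis
      using window_Ospace_iff[OF that[unfolded window_def, rule_format] fin]
      unfolding system_def x_def t_def by simp
  qed
  have "\<exists>!f. window f \<and> (\<forall>s\<in>{0..int T - 1}. (\<lambda>k. f k - g s k) \<in> Ospace N (Q s) (N - int D))"
  proof (rule ex_ex1I)
    obtain v where v: "system v"
      using binomial_system_solvable[of T D x t] inj unfolding system_def by blast
    define f where "f k = (if N + 1 - int (T * D) \<le> k \<and> k \<le> N then v (nat (N - k)) else 0)" for k
    have "window f" unfolding window_def f_def by auto
    moreover have "(\<lambda>j. f (N - int j)) j = v j" if "j < T * D" for j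
    proof -
      have "int j < int T * int D" using that by (simp flip: of_nat_mult)
      then show ?thesis unfolding f_def by auto
    qed
    then have "system (\<lambda>j. f (N - int j))" using v unfolding system_def by simp
    ultimately show "\<exists>f. window f \<and> (\<forall>s\<in>{0..int T - 1}. (\<lambda>k. f k - g s k) \<in> Ospace N (Q s) (N - int D))"
      using reduce by blast
  next
    fix f1 f2
    assume f1: "window f1 \<and> (\<forall>s\<in>{0..int T - 1}. (\<lambda>k. f1 k - g s k) \<in> Ospace N (Q s) (N - int D))"
       and f2: "window f2 \<and> (\<forall>s\<in>{0..int T - 1}. (\<lambda>k. f2 k - g s k) \<in> Ospace N (Q s) (N - int D))"
    have "system (\<lambda>j. f1 (N - int j))" "system (\<lambda>j. f2 (N - int j))" using f1 f2 reduce by blast+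
    then have "\<forall>j<T*D. f1 (N - int j) - f2 (N - int j) = 0"
      by (intro binomial_system_injective[OF inj])
        (auto simp: system_def sum_subtractf left_diff_distrib)
    then have "f1 (N - int j) = f2 (N - int j)" if "j < T * D" for j using that by simp
    moreover have "f1 k = 0 \<and> f2 k = 0" if "\<not> (N + 1 - int (T * D) \<le> k \<and> k \<le> N)" for k
      using that f1 f2 unfolding window_def by blast
    ultimately show "f1 = f2"
    proof (intro ext)
      fix k
      assume inside: "\<And>j. j < T * D \<Longrightarrow> f1 (N - int j) = f2 (N - int j)"
        and outside: "\<And>k. \<not> (N + 1 - int (T * D) \<le> k \<and> k \<le> N) \<Longrightarrow> f1 k = 0 \<and> f2 k = 0"
      show "f1 k = f2 k"
      proof (cases "N + 1 - int (T * D) \<le> k \<and> k \<le> N")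
        case True
        then have "nat (N - k) < T * D" by (subst nat_less_iff) auto
        then show ?thesis using inside[of "nat (N - k)"] True by simp
      qed (use outside in auto)
    qed
  qed
  then show ?thesis unfolding window_def .
qed

lemma idem_spec:
  fixes T :: nat and \<alpha> \<beta> \<Delta> :: int and m n :: rat
  defines "N \<equiv> \<alpha> + \<beta> - 1 - \<Delta>"
    and "D \<equiv> \<alpha> + \<beta> - 1 - \<Delta> + lpart m + lpart n + 3"
  assumes T0: "T > 0" and D0: "D > 0" and j: "j \<le> N"
  shows "\<forall>k. idem T n m \<Delta> \<alpha> \<beta> r j k \<noteq> 0 \<longrightarrow> N + 1 - int T * D \<le> k \<and> k \<le> N"
    and "\<forall>s\<in>{0..int T - 1}. (\<lambda>k. idem T n m \<Delta> \<alpha> \<beta> r j k - (if r = s then zmon j k else 0))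
          \<in> Ospace N (of_int (\<alpha> - 1 + lpart m + dlt (s \<le> ipart T m)) + of_int s / of_nat T)
              (- lpart m - lpart n - 3)"
proof -
  define Q where "Q s = of_int (\<alpha> - 1 + lpart m + dlt (s \<le> ipart T m)) + of_int s / (of_nat T :: rat)" for s
  define P where "P f \<longleftrightarrow> (\<forall>k. f k \<noteq> 0 \<longrightarrow> N + 1 - int T * D \<le> k \<and> k \<le> N) \<and>
     (\<forall>s\<in>{0..int T - 1}. (\<lambda>k. f k - (if r = s then zmon j k else 0)) \<in> Ospace N (Q s) (- lpart m - lpart n - 3))"
    for f
  have "\<not> (j \<ge> \<alpha> + \<beta> - 1 - \<Delta> + 1 \<or> \<alpha> + \<beta> - 1 - \<Delta> + lpart m + lpart n + 3 \<le> 0)"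
    using j D0 unfolding N_def D_def by auto
  then have idem_eq: "idem T n m \<Delta> \<alpha> \<beta> r j = (THE f. P f)"
    unfolding idem_def Let_def P_def Q_def N_def D_def by (simp only: if_False)
  have ex1: "\<exists>!f. (\<forall>k. f k \<noteq> 0 \<longrightarrow> N + 1 - int (T * nat D) \<le> k \<and> k \<le> N) \<and>
     (\<forall>s\<in>{0..int T - 1}. (\<lambda>k. f k - (if r = s then zmon j k else 0)) \<in> Ospace N (Q s) (N - int (nat D)))"
  proof (rule window_interpolation_ex1)
    fix s s' assume "s \<in> {0..int T - 1}" "s' \<in> {0..int T - 1}" "Q s - Q s' \<in> \<int>"
    then show "s = s'" unfolding Q_def by (rule offsets_incongruent[OF T0])
  next
    fix s
    show "finite {k. (if r = s then zmon j k else 0) \<noteq> 0}"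
      by (rule finite_subset[OF _ finite_support_zmon[of j]]) auto
  qed
  have "int (nat D) = D" using D0 by simp
  moreover have "N - D = - lpart m - lpart n - 3" unfolding N_def D_def by simp
  ultimately have "\<exists>!f. P f" using ex1 unfolding P_def of_nat_mult by simp
  from theI'[OF this, folded idem_eq]
  show "\<forall>k. idem T n m \<Delta> \<alpha> \<beta> r j k \<noteq> 0 \<longrightarrow> N + 1 - int T * D \<le> k \<and> k \<le> N"
    and "\<forall>s\<in>{0..int T - 1}. (\<lambda>k. idem T n m \<Delta> \<alpha> \<beta> r j k - (if r = s then zmon j k else 0))
          \<in> Ospace N (of_int (\<alpha> - 1 + lpart m + dlt (s \<le> ipart T m)) + of_int s / of_nat T)
              (- lpart m - lpart n - 3)"
    unfolding P_def Q_def by blast+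
qed

lemma idem_finite_support:
  assumes "T > 0"
  shows "finite {k. idem T n m \<Delta> \<alpha> \<beta> r j k \<noteq> 0}"
proof (cases "j \<ge> \<alpha> + \<beta> - 1 - \<Delta> + 1 \<or> \<alpha> + \<beta> - 1 - \<Delta> + lpart m + lpart n + 3 \<le> 0")
  case True
  then have "idem T n m \<Delta> \<alpha> \<beta> r j = (\<lambda>k. 0)" unfolding idem_def Let_def by (simp only: if_True)
  then show ?thesis by simp
next
  case False
  define N where "N = \<alpha> + \<beta> - 1 - \<Delta>"
  define D where "D = \<alpha> + \<beta> - 1 - \<Delta> + lpart m + lpart n + 3"
  have "\<forall>k. idem T n m \<Delta> \<alpha> \<beta> r j k \<noteq> 0 \<longrightarrow> N + 1 - int T * D \<le> k \<and> k \<le> N"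
    unfolding N_def D_def by (rule idem_spec(1)[OF assms]) (use False in auto)
  then have "{k. idem T n m \<Delta> \<alpha> \<beta> r j k \<noteq> 0} \<subseteq> {N + 1 - int T * D..N}" by auto
  then show ?thesis by (rule finite_subset) simp
qed

text \<open>At \<alpha> = 0 (the weight of the vacuum) the coefficient of z^(-1) in e^{T,r}_{n,m}(0,\<beta>,j;z)
  is \<delta>_{r,0} \<delta>_{j,-1}: for s = 0 the space O(N, l1, -l1-l3-3) has no terms in degree -1.\<close>
lemma idem_vacuum_coeff:
  fixes T :: nat
  assumes T0: "T > 0" and l1: "lpart m \<ge> 0" and l3: "lpart n \<ge> 0" and i1: "0 \<le> ipart T m"
    and \<beta>: "\<Delta> \<le> \<beta>"
  shows "idem T n m \<Delta> 0 \<beta> r j (-1) = (if r = 0 \<and> j = -1 then 1 else 0)"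
proof (cases "j \<ge> \<beta> - \<Delta>")
  case True
  then have "0 + \<beta> - 1 - \<Delta> + 1 \<le> j \<or> 0 + \<beta> - 1 - \<Delta> + lpart m + lpart n + 3 \<le> 0" by simp
  then have "idem T n m \<Delta> 0 \<beta> r j = (\<lambda>k. 0)" unfolding idem_def Let_def by (simp only: if_True)
  then show ?thesis using True \<beta> by simp
next
  case False
  have D0: "0 < 0 + \<beta> - 1 - \<Delta> + lpart m + lpart n + 3" and j: "j \<le> 0 + \<beta> - 1 - \<Delta>"
    using False l1 l3 \<beta> by auto
  have "(0::int) \<in> {0..int T - 1}" using T0 by simp
  from bspec[OF idem_spec(2)[OF T0 D0 j] this]
  have "(\<lambda>k. idem T n m \<Delta> 0 \<beta> r j k - (if r = 0 then zmon j k else 0))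
          \<in> Ospace (0 + \<beta> - 1 - \<Delta>) (of_int (0 - 1 + lpart m + dlt (0 \<le> ipart T m)) + of_int 0 / of_nat T)
              (- lpart m - lpart n - 3)" by simp
  moreover have "(of_int (0 - 1 + lpart m + dlt (0 \<le> ipart T m)) + of_int 0 / of_nat T :: rat)
      = of_nat (nat (lpart m))"
    using l1 i1 by (simp add: dlt_def)
  ultimately have "(\<lambda>k. idem T n m \<Delta> 0 \<beta> r j k - (if r = 0 then zmon j k else 0))
          \<in> Ospace (0 + \<beta> - 1 - \<Delta>) (of_nat (nat (lpart m))) (- lpart m - lpart n - 3)" by simp
  from Ospace_nat_vanishes[OF this, of "-1"]
  have "idem T n m \<Delta> 0 \<beta> r j (-1) - (if r = 0 then zmon j (-1) else 0) = 0" using l1 l3 \<beta> by simp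
  then show ?thesis by (auto simp: zmon_def)
qed


lemma lpart_nat: "T > 0 \<Longrightarrow> lpart (of_nat k / of_nat T) = int (k div T)"
  unfolding lpart_def by (simp add: floor_divide_of_nat_eq)

lemma ipart_nat:
  assumes T0: "T > 0"
  shows "ipart T (of_nat k / of_nat T) = int (k mod T)"
proof -
  have e: "(of_nat k :: rat) = of_nat (k div T) * of_nat T + of_nat (k mod T)"
    by (metis div_mult_mod_eq of_nat_add of_nat_mult)
  have "(of_nat T :: rat) * (of_nat k / of_nat T - of_int (int (k div T))) = of_nat (k mod T)"
    using T0 by (subst e) (simp add: field_simps)
  then show ?thesis unfolding ipart_def by (simp add: floor_divide_of_nat_eq)
qed

lemma bracket_nat:
  assumes T0: "T > 0"
  shows "bracket T (of_nat c / of_nat T) (of_nat b / of_nat T) = (int c - int b) mod int T"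
  unfolding bracket_def
proof (rule the_equality)
  define r0 where "r0 = (int c - int b) mod int T"
  have "int c - int b = (int c - int b) div int T * int T + r0" unfolding r0_def by simp
  then have "(of_int (int c - int b) :: rat) = of_int ((int c - int b) div int T * int T + r0)" by simp
  then have "(of_nat c / of_nat T - of_nat b / of_nat T - of_int r0 / of_nat T :: rat) =
      of_int ((int c - int b) div int T)"
    using T0 by (simp add: field_simps)
  moreover have "0 \<le> r0" "r0 \<le> int T - 1" using T0 unfolding r0_def by auto
  ultimately show "0 \<le> r0 \<and> r0 \<le> int T - 1 \<and>
    of_nat c / of_nat T - of_nat b / of_nat T - of_int r0 / of_nat T \<in> (\<int> :: rat set)"
    by auto
next
  fix r assume r: "0 \<le> r \<and> r \<le> int T - 1 \<and>
    of_nat c / of_nat T - of_nat b / of_nat T - of_int r / of_nat T \<in> (\<int> :: rat set)"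
  then obtain z where "of_nat c / of_nat T - of_nat b / of_nat T - of_int r / of_nat T = (of_int z :: rat)"
    by (auto elim: Ints_cases)
  moreover have "(of_nat c - of_nat b - of_int r :: rat) =
      (of_nat c / of_nat T - of_nat b / of_nat T - of_int r / of_nat T) * of_nat T"
    using T0 by (simp add: field_simps)
  ultimately have "(of_int (int c - int b - r) :: rat) = of_int (z * int T)" by simp
  then have "int c - int b = z * int T + r" by (simp only: of_int_eq_iff)
  then show "r = (int c - int b) mod int T" using r by simp
qed


section \<open>The coefficient of z^(-1) of P^T_{n,p,m}(0, \<beta>; z)\<close>

lemma Ppoly_finite_support:
  assumes "T > 0"
  shows "finite {k. Ppoly T n p m \<Delta> \<alpha> \<beta> k \<noteq> 0}"
  unfolding Ppoly_def Let_def
  by (intro finite_support_sum finite_support_scale idem_finite_support[OF assms]) auto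

text \<open>The Vandermonde identity behind the theorem, with l1, l2, l3 the integer parts of m, p, n
  and \<mu> = l2 - l1 - l3 - 1:
  \<Sum>_{i \<le> l2} (\<mu> choose i) (l1 choose (i - \<mu> - 1)) = (\<mu> + l1 choose l2 - l3) = \<delta>_{l2,l3}.\<close>
lemma vacuum_binomial_identity:
  fixes l1 l2 l3 :: nat
  defines "\<mu> \<equiv> int l2 - int l1 - int l3 - 1"
  shows "(\<Sum>i\<in>{0..l2}. (of_int \<mu> gchoose i) *
      (if \<mu> - int i \<le> -1 then (of_nat l1 gchoose nat (-1 - \<mu> + int i)) else 0)) = (if l2 = l3 then 1 else (0::complex))"
proof (cases "l2 < l3")
  case True
  have "l1 < nat (-1 - \<mu> + int i)" for i using True unfolding \<mu>_def by auto
  then show ?thesis using True by (auto simp: of_nat_gchoose_eq_0 intro!: sum.neutral)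
next
  case False
  define d where "d = l2 - l3"
  have d: "d \<le> l2" "\<mu> = int d - int l1 - 1" using False unfolding d_def \<mu>_def by auto
  have summand: "(of_int \<mu> gchoose i) * (if \<mu> - int i \<le> -1 then (of_nat l1 gchoose nat (-1 - \<mu> + int i)) else 0) =
      (if i \<le> d then (of_int \<mu> gchoose i) * (of_nat l1 gchoose (d - i)) else (0::complex))" for i
  proof (cases "i \<le> d \<and> d \<le> i + l1")
    case True
    then have n: "nat (-1 - \<mu> + int i) = l1 - (d - i)" and C: "\<mu> - int i \<le> -1" and i: "i \<le> d"
      using d by auto
    have sym: "(of_nat l1::complex) gchoose (l1 - (d - i)) = of_nat l1 gchoose (d - i)"
      using gbinomial_of_nat_symmetric[where 'a=complex, of "d - i" l1] True by (simp add: le_diff_conv)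
    show ?thesis by (simp only: C i n sym if_True)
  next
    case False
    then show ?thesis
      using d of_nat_gchoose_eq_0[of l1 "d - i"] of_nat_gchoose_eq_0[of l1 "nat (-1 - \<mu> + int i)"] by auto
  qed
  have "(\<Sum>i\<in>{0..l2}. (of_int \<mu> gchoose i) *
      (if \<mu> - int i \<le> -1 then (of_nat l1 gchoose nat (-1 - \<mu> + int i)) else 0)) =
      (\<Sum>i\<in>{0..l2}. if i \<le> d then (of_int \<mu> gchoose i) * (of_nat l1 gchoose (d - i)) else (0::complex))"
    by (intro sum.cong refl summand)
  also have "\<dots> = (\<Sum>i\<in>{0..d}. (of_int \<mu> gchoose i) * (of_nat l1 gchoose (d - i)))"
    by (subst sum.inter_filter[symmetric]) (use d in \<open>auto intro!: sum.cong\<close>)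
  also have "\<dots> = (of_int \<mu> + of_nat l1) gchoose d" by (rule gbinomial_Vandermonde)
  also have "\<dots> = (if l2 = l3 then 1 else 0)"
  proof (cases "d = 0")
    case True
    then show ?thesis using False unfolding d_def by auto
  next
    case False
    then have "(of_int \<mu> + of_nat l1 :: complex) = of_nat (d - 1)" using d by simp
    then show ?thesis using False of_nat_gchoose_eq_0[of "d - 1" d] unfolding d_def by auto
  qed
  finally show ?thesis .
qed

lemma sum_interval_times_delta:
  "(\<Sum>j\<in>{a..b::int}. F j * (if P \<and> j = c then 1 else 0)) =
    (if P \<and> a \<le> c \<and> c \<le> b then F c else (0::complex))"
proof -
  have "(\<Sum>j\<in>{a..b}. F j * (if P \<and> j = c then 1 else 0)) =
      (\<Sum>j\<in>{a..b}. if j = c then (if P then F j else 0) else 0)"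
    by (intro sum.cong) auto
  then show ?thesis by (simp add: sum.delta)
qed

text \<open>Main computation: with l1, l2, l3 the integer parts of m, p, n, only r = \<langle>p - n\<rangle> = 0 can
  contribute, and then the coefficient is the Vandermonde sum above.\<close>
lemma Ppoly_vacuum_coeff:
  fixes T a1 b c :: nat
  assumes T0: "T > 0" and \<beta>: "\<Delta> \<le> \<beta>"
    and m: "m = of_nat a1 / of_nat T" and n: "n = of_nat b / of_nat T" and p: "p = of_nat c / of_nat T"
  shows "Ppoly T n p m \<Delta> 0 \<beta> (-1) = (if n = p then 1 else 0)"
proof -
  have lm: "lpart m = int (a1 div T)" and im: "ipart T m = int (a1 mod T)"
    and ln: "lpart n = int (b div T)" and inn: "ipart T n = int (b mod T)"
    and lp: "lpart p = int (c div T)" and br: "bracket T p n = (int c - int b) mod int T"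
    unfolding m n p using T0 lpart_nat ipart_nat bracket_nat by auto
  have idem: "idem T n m \<Delta> 0 \<beta> r j (-1) = (if r = 0 \<and> j = -1 then 1 else 0)" for r j
    using idem_vacuum_coeff[OF T0 _ _ _ \<beta>] lm ln im by auto
  define r where "r = bracket T p n"
  define \<mu> where "\<mu> = lpart p - lpart m - lpart n - dlt (r \<le> ipart T m) - dlt (int T \<le> r + ipart T n)"
  define cc where "cc = of_int (0 - 1 + lpart m + dlt (r \<le> ipart T m)) + of_int r / (of_nat T :: rat)"
  have P: "Ppoly T n p m \<Delta> 0 \<beta> (-1) = (\<Sum>i\<in>{0..nat (lpart p)}. (of_int \<mu> gchoose i) *
      (if r = 0 \<and> \<mu> - int i \<le> -1 then (of_rat cc gchoose nat (-1 - \<mu> + int i)) else 0))"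
    unfolding Ppoly_def Let_def r_def[symmetric] \<mu>_def[symmetric] cc_def[symmetric] idem
    using \<beta> by (simp add: sum_interval_times_delta)
  have np: "n = p \<longleftrightarrow> b = c" unfolding n p using T0 by (auto simp: divide_cancel_right)
  show ?thesis
  proof (cases "r = 0")
    case False
    then have "b \<noteq> c" unfolding r_def br by auto
    then show ?thesis unfolding P using False np by simp
  next
    case True
    then have "int c mod int T = int b mod int T" unfolding r_def br
      by (simp add: mod_eq_dvd_iff dvd_eq_mod_eq_0)
    then have "c mod T = b mod T" by (metis of_nat_eq_iff zmod_int)
    then have bc: "b = c \<longleftrightarrow> c div T = b div T" by (metis div_mult_mod_eq)
    have mu: "\<mu> = int (c div T) - int (a1 div T) - int (b div T) - 1"
      unfolding \<mu>_def True lm ln lp im inn using T0 by (simp add: dlt_def not_le)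
    have cc: "(of_rat cc :: complex) = of_nat (a1 div T)"
      unfolding cc_def True lm im by (simp add: dlt_def)
    have "Ppoly T n p m \<Delta> 0 \<beta> (-1) = (\<Sum>i\<in>{0..c div T}. (of_int \<mu> gchoose i) *
      (if \<mu> - int i \<le> -1 then (of_nat (a1 div T) gchoose nat (-1 - \<mu> + int i)) else 0))"
      unfolding P lp cc using True by simp
    also have "\<dots> = (if c div T = b div T then 1 else 0)"
      unfolding mu by (rule vacuum_binomial_identity)
    finally show ?thesis using np bc by auto
  qed
qed


section \<open>The vacuum in a graded vertex algebra\<close>

lemma vertex_algebraD:
  assumes "vertex_algebra sc Y vac"
  shows "Modules.module sc"
    and "Vector_Spaces.linear sc sc (\<lambda>a. Y a i b)"
    and "Y vac i b = (if i = -1 then b else 0)"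
  using assms unfolding vertex_algebra_def by (simp_all add: module_iff_vector_space)

lemma graded_vertex_algebraD:
  assumes "graded_vertex_algebra sc Y vac Vg \<Delta>"
  shows "vertex_algebra sc Y vac" and "Modules.module.subspace sc (Vg k)"
    and "k < \<Delta> \<Longrightarrow> Vg k = {0}"
    and "\<exists>!c. finite {k. c k \<noteq> 0} \<and> (\<forall>k. c k \<in> Vg k) \<and> v = sum c {k. c k \<noteq> 0}"
    and "vac \<in> Vg 0"
  using assms unfolding graded_vertex_algebra_def by simp_all

lemma graded_components:
  assumes "graded_vertex_algebra sc Y vac Vg \<Delta>"
  shows "finite {k. comp Vg v k \<noteq> 0}" "\<And>k. comp Vg v k \<in> Vg k"
    and "v = sum (comp Vg v) {k. comp Vg v k \<noteq> 0}"
proof -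
  have "finite {k. comp Vg v k \<noteq> 0} \<and> (\<forall>k. comp Vg v k \<in> Vg k) \<and> v = sum (comp Vg v) {k. comp Vg v k \<noteq> 0}"
    unfolding comp_def by (rule theI'[OF graded_vertex_algebraD(4)[OF assms]])
  then show "finite {k. comp Vg v k \<noteq> 0}" "\<And>k. comp Vg v k \<in> Vg k"
    and "v = sum (comp Vg v) {k. comp Vg v k \<noteq> 0}"
    by blast+
qed

lemma graded_support_ge:
  assumes "graded_vertex_algebra sc Y vac Vg \<Delta>" "comp Vg v k \<noteq> 0"
  shows "\<Delta> \<le> k"
  using graded_components(2)[OF assms(1), of v k] graded_vertex_algebraD(3)[OF assms(1), of k] assms(2)
  by fastforce

lemma graded_vacuum_component:
  assumes G: "graded_vertex_algebra sc Y vac Vg \<Delta>"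
  shows "comp Vg vac = (\<lambda>k. if k = 0 then vac else 0)"
proof -
  let ?c = "\<lambda>k. if k = 0 then vac else 0"
  have zero: "0 \<in> Vg k" for k
    using vertex_algebraD(1)[OF graded_vertex_algebraD(1)[OF G]] graded_vertex_algebraD(2)[OF G]
    by (rule Modules.module.subspace_0)
  have "finite {k. ?c k \<noteq> 0}" by (rule finite_subset[of _ "{0}"]) auto
  moreover have "\<forall>k. ?c k \<in> Vg k" using zero graded_vertex_algebraD(5)[OF G] by auto
  moreover have "vac = sum ?c {k. ?c k \<noteq> 0}"
  proof (cases "vac = 0")
    case False
    then have "{k. ?c k \<noteq> 0} = {0}" by auto
    then show ?thesis by simp
  qed simp
  ultimately have "finite {k. ?c k \<noteq> 0} \<and> (\<forall>k. ?c k \<in> Vg k) \<and> vac = sum ?c {k. ?c k \<noteq> 0}"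
    by blast
  then show ?thesis unfolding comp_def by (rule the1_equality[OF graded_vertex_algebraD(4)[OF G]])
qed

text \<open>Substituting z^j \<mapsto> vac_j b into a Laurent polynomial f gives f_{-1} b, since the only
  nonzero mode of the vacuum is vac_{-1} = id.\<close>
lemma vacuum_substitution:
  assumes VA: "vertex_algebra sc Y vac" and fin: "finite {j. f j \<noteq> 0}"
  shows "(\<Sum>j\<in>{j. f j \<noteq> 0}. sc (f j) (Y vac j b)) = sc (f (-1)) b"
proof -
  interpret Modules.module sc by (rule vertex_algebraD(1)[OF VA])
  have "(\<Sum>j\<in>{j. f j \<noteq> 0}. sc (f j) (Y vac j b)) = (\<Sum>j\<in>{j. f j \<noteq> 0}. if j = -1 then sc (f j) b else 0)"
    by (intro sum.cong) (auto simp: vertex_algebraD(3)[OF VA])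
  also have "\<dots> = sc (f (-1)) b" using fin by (simp add: sum.delta)
  finally show ?thesis .
qed

text \<open>The product with the vacuum on the left: only the weight-0 component of vac occurs,
  and it contributes the coefficient of z^(-1) of P(0, wt b; z).\<close>
lemma star_vacuum_left:
  assumes G: "graded_vertex_algebra sc Y vac Vg \<Delta>"
    and fin: "\<And>k. finite {j. Ppoly T n p m \<Delta> 0 k j \<noteq> 0}"
  shows "star sc Y Vg \<Delta> T n p m vac a =
    (\<Sum>k\<in>{k. comp Vg a k \<noteq> 0}. sc (Ppoly T n p m \<Delta> 0 k (-1)) (comp Vg a k))"
proof -
  have VA: "vertex_algebra sc Y vac" by (rule graded_vertex_algebraD(1)[OF G])
  show ?thesis
  proof (cases "vac = 0")
    case True
    txt \<open>Then V = 0: every a equals vac_{-1} a = 0.\<close>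
    have "Y 0 (-1) a = 0"
      using Modules.module_hom.zero[OF vertex_algebraD(2)[OF VA, unfolded module_hom_iff_linear[symmetric]]]
      by simp
    then have "a = vac" using True vertex_algebraD(3)[OF VA, of "-1" a] by simp
    then have "comp Vg vac = (\<lambda>k. 0)" "comp Vg a = (\<lambda>k. 0)"
      using True graded_vacuum_component[OF G] by auto
    then show ?thesis unfolding star_def by simp
  next
    case False
    then have "{k. comp Vg vac k \<noteq> 0} = {0}" by (simp add: graded_vacuum_component[OF G])
    then have "star sc Y Vg \<Delta> T n p m vac a = (\<Sum>k\<in>{k. comp Vg a k \<noteq> 0}.
        \<Sum>j\<in>{j. Ppoly T n p m \<Delta> 0 k j \<noteq> 0}. sc (Ppoly T n p m \<Delta> 0 k j) (Y vac j (comp Vg a k)))"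
      unfolding star_def by (simp add: graded_vacuum_component[OF G])
    also have "\<dots> = (\<Sum>k\<in>{k. comp Vg a k \<noteq> 0}. sc (Ppoly T n p m \<Delta> 0 k (-1)) (comp Vg a k))"
      by (intro sum.cong refl vacuum_substitution[OF VA fin])
    finally show ?thesis .
  qed
qed


theorem mainTheorem9:
  fixes sc :: "complex \<Rightarrow> 'v::ab_group_add \<Rightarrow> 'v"
    and Y :: "'v \<Rightarrow> int \<Rightarrow> 'v \<Rightarrow> 'v" and vac :: 'v
    and Vg :: "int \<Rightarrow> 'v set" and \<Delta> :: int and T :: nat
    and m n p :: rat and a :: 'v
  assumes "graded_vertex_algebra sc Y vac Vg \<Delta>"
    and "T > 0"
    and "\<exists>k::nat. m = of_nat k / of_nat T"
    and "\<exists>k::nat. n = of_nat k / of_nat T"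
    and "\<exists>k::nat. p = of_nat k / of_nat T"
  shows "star sc Y Vg \<Delta> T n p m vac a = (if n = p then a else 0)"
proof -
  note G = assms(1)
  interpret Modules.module sc by (rule vertex_algebraD(1)[OF graded_vertex_algebraD(1)[OF G]])
  obtain a1 b c :: nat where "m = of_nat a1 / of_nat T" "n = of_nat b / of_nat T" "p = of_nat c / of_nat T"
    using assms(3-5) by blast
  then have coeff: "Ppoly T n p m \<Delta> 0 k (-1) = (if n = p then 1 else 0)" if "comp Vg a k \<noteq> 0" for k
    using Ppoly_vacuum_coeff[OF assms(2) graded_support_ge[OF G that]] by blast
  have "star sc Y Vg \<Delta> T n p m vac a =
      (\<Sum>k\<in>{k. comp Vg a k \<noteq> 0}. sc (Ppoly T n p m \<Delta> 0 k (-1)) (comp Vg a k))"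
    by (rule star_vacuum_left[OF G Ppoly_finite_support[OF assms(2)]])
  also have "\<dots> = (\<Sum>k\<in>{k. comp Vg a k \<noteq> 0}. if n = p then comp Vg a k else 0)"
    by (rule sum.cong) (simp_all add: coeff)
  also have "\<dots> = (if n = p then a else 0)"
    using graded_components(3)[OF G, of a] by simp
  finally show ?thesis .
qed

end
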